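(* Let $p$ be a prime and $\alpha\in\mathbb{Q}_p$ an algebraic number. Then the continued fractions $[b_0,b_1,\dots]$ produced from $\alpha$ by Algorithm A and by Algorithm B (defined in the context) always converge to a $p$-adic number.
   Context: Let $\mathcal{R}=\{-\frac{p-1}{2},\dots,0,\dots,\frac{p-1}{2}\}$ if $p$ is odd, and $\mathcal{R}=\{0,1\}$ if $p=2$. Every nonzero $\alpha\in\mathbb{Q}_p$ is written uniquely as $\alpha=\sum_{n\ge r}a_np^n$ with $r=v_p(\alpha)$, $a_n\in\mathcal{R}$, $a_r\ne0$. Put $s(\alpha)=\sum_{n=r}^{0}a_np^n$, $t(\alpha)=\sum_{n=r}^{-1}a_np^n$ (empty sums are $0$). For an algebraic $\alpha\in\mathbb{Q}_p$ whose minimal polynomial over $\mathbb{Q}$ has degree $d$, with trace $\operatorname{Tr}(\alpha)$, and $\operatorname{round}(x)$ the integer nearest to the real $x$, define $\bar s(\alpha)=\operatorname{round}\!\left(\frac{\operatorname{Tr}(\alpha)/d-s(\alpha)}{p}\right)p+s(\alpha)$ and $\bar t(\alpha)=\operatorname{round}\!\left(\operatorname{Tr}(\alpha)/d-t(\alpha)\right)+t(\alpha)$. An expansion algorithm starts with $\alpha_0=\alpha$; at step $n$ it chooses $b_n$ by a rule; if $\alpha_n=b_n$ it stops, otherwise it sets $\alpha_{n+1}=\frac1{\alpha_n-b_n}$. The continued fraction $[b_0,b_1,\dots]=b_0+\cfrac{1}{b_1+\cfrac{1}{b_2+\cdots}}$ converges if its convergents $[b_0,\dots,b_n]$ converge in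 $\mathbb{Q}_p$. Algorithm A: $b_0=\bar s(\alpha_0)$; for $n\ge1$, $b_n=\bar s(\alpha_n)$ if $v_p(\alpha_n)=0$ and $b_n=\bar t(\alpha_n)$ if $v_p(\alpha_n)<0$. Algorithm B: $b_n=\bar s(\alpha_n)$ if $n$ is even and $b_n=\bar t(\alpha_n)$ if $n$ is odd. *)

theory Defs
  imports "HOL-Computational_Algebra.Computational_Algebra"
begin

text \<open>The field Q_p is characterised axiomatically (up to unique isometric isomorphism):
  a field of characteristic 0 (containing Q via of_rat) with a non-archimedean absolute value
  extending the p-adic absolute value of Q, complete, and in which Q is dense.\<close>

definition padic_field :: "nat \<Rightarrow> ('a::field_char_0 \<Rightarrow> real) \<Rightarrow> bool" where
  "padic_field p absv \<longleftrightarrow>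
     (\<forall>x. 0 \<le> absv x) \<and>
     (\<forall>x. absv x = 0 \<longleftrightarrow> x = 0) \<and>
     (\<forall>x y. absv (x * y) = absv x * absv y) \<and>
     (\<forall>x y. absv (x + y) \<le> max (absv x) (absv y)) \<and>
     absv (of_nat p) = 1 / real p \<and>
     (\<forall>m::int. coprime m (int p) \<longrightarrow> absv (of_int m) = 1) \<and>
     (\<forall>X::nat \<Rightarrow> 'a. (\<forall>e>0. \<exists>N. \<forall>m\<ge>N. \<forall>n\<ge>N. absv (X m - X n) < e)
         \<longrightarrow> (\<exists>L. \<forall>e>0. \<exists>N. \<forall>n\<ge>N. absv (X n - L) < e)) \<and>
     (\<forall>x. \<forall>e>0. \<exists>q::rat. absv (x - of_rat q) < e)"

definition padic_tendsto :: "('a::field_char_0 \<Rightarrow> real) \<Rightarrow> (nat \<Rightarrow> 'a) \<Rightarrow> 'a \<Rightarrow> bool" where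
  "padic_tendsto absv X L \<longleftrightarrow> (\<forall>e>0. \<exists>N. \<forall>n\<ge>N. absv (X n - L) < e)"

definition padic_val :: "nat \<Rightarrow> ('a::field_char_0 \<Rightarrow> real) \<Rightarrow> 'a \<Rightarrow> int" where
  "padic_val p absv x = (THE r::int. absv x = real p powr (- of_int r))"

definition digit_set :: "nat \<Rightarrow> int set" where
  "digit_set p = (if p = 2 then {0, 1} else {- ((int p - 1) div 2) .. (int p - 1) div 2})"

definition padic_digits :: "nat \<Rightarrow> ('a::field_char_0 \<Rightarrow> real) \<Rightarrow> 'a \<Rightarrow> int \<Rightarrow> int" where
  "padic_digits p absv x = (THE a::int \<Rightarrow> int.
      (\<forall>n. a n \<in> digit_set p) \<and>
      (\<forall>n < padic_val p absv x. a n = 0) \<and>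
      a (padic_val p absv x) \<noteq> 0 \<and>
      padic_tendsto absv
        (\<lambda>N. of_rat (\<Sum>n\<in>{padic_val p absv x .. padic_val p absv x + int N}.
                         of_int (a n) * (of_nat p :: rat) powi n)) x)"

definition padic_s :: "nat \<Rightarrow> ('a::field_char_0 \<Rightarrow> real) \<Rightarrow> 'a \<Rightarrow> rat" where
  "padic_s p absv x = (if x = 0 then 0 else
     (\<Sum>n\<in>{padic_val p absv x .. 0}. of_int (padic_digits p absv x n) * (of_nat p :: rat) powi n))"

definition padic_t :: "nat \<Rightarrow> ('a::field_char_0 \<Rightarrow> real) \<Rightarrow> 'a \<Rightarrow> rat" where
  "padic_t p absv x = (if x = 0 then 0 else
     (\<Sum>n\<in>{padic_val p absv x .. -1}. of_int (padic_digits p absv x n) * (of_nat p :: rat) powi n))"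

definition algebraic_over_Q :: "'a::field_char_0 \<Rightarrow> bool" where
  "algebraic_over_Q x \<longleftrightarrow> (\<exists>P::rat poly. P \<noteq> 0 \<and> poly (map_poly of_rat P) x = 0)"

definition min_poly_Q :: "'a::field_char_0 \<Rightarrow> rat poly" where
  "min_poly_Q x = (THE P::rat poly. lead_coeff P = 1 \<and> irreducible P \<and> poly (map_poly of_rat P) x = 0)"

text \<open>Trace of x: sum of conjugates = minus the subleading coefficient of the minimal polynomial.\<close>
definition trace_Q :: "'a::field_char_0 \<Rightarrow> rat" where
  "trace_Q x = - coeff (min_poly_Q x) (degree (min_poly_Q x) - 1)"

definition deg_Q :: "'a::field_char_0 \<Rightarrow> nat" where
  "deg_Q x = degree (min_poly_Q x)"

definition sbar :: "nat \<Rightarrow> ('a::field_char_0 \<Rightarrow> real) \<Rightarrow> 'a \<Rightarrow> rat" where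
  "sbar p absv x = of_int (round ((trace_Q x / of_nat (deg_Q x) - padic_s p absv x) / of_nat p)) * of_nat p
                   + padic_s p absv x"

definition tbar :: "nat \<Rightarrow> ('a::field_char_0 \<Rightarrow> real) \<Rightarrow> 'a \<Rightarrow> rat" where
  "tbar p absv x = of_int (round (trace_Q x / of_nat (deg_Q x) - padic_t p absv x)) + padic_t p absv x"

fun cf_alpha :: "(nat \<Rightarrow> 'a::field_char_0 \<Rightarrow> rat) \<Rightarrow> 'a \<Rightarrow> nat \<Rightarrow> 'a" where
  "cf_alpha rule a 0 = a"
| "cf_alpha rule a (Suc n) = inverse (cf_alpha rule a n - of_rat (rule n (cf_alpha rule a n)))"

definition cf_b :: "(nat \<Rightarrow> 'a::field_char_0 \<Rightarrow> rat) \<Rightarrow> 'a \<Rightarrow> nat \<Rightarrow> rat" where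
  "cf_b rule a n = rule n (cf_alpha rule a n)"

definition cf_stops :: "(nat \<Rightarrow> 'a::field_char_0 \<Rightarrow> rat) \<Rightarrow> 'a \<Rightarrow> bool" where
  "cf_stops rule a \<longleftrightarrow> (\<exists>n. cf_alpha rule a n = of_rat (cf_b rule a n))"

fun cf_eval :: "rat list \<Rightarrow> rat" where
  "cf_eval [] = 0"
| "cf_eval [b] = b"
| "cf_eval (b # bs) = b + 1 / cf_eval bs"

definition cf_convergent :: "(nat \<Rightarrow> rat) \<Rightarrow> nat \<Rightarrow> rat" where
  "cf_convergent b n = cf_eval (map b [0..<Suc n])"

definition ruleA :: "nat \<Rightarrow> ('a::field_char_0 \<Rightarrow> real) \<Rightarrow> nat \<Rightarrow> 'a \<Rightarrow> rat" where
  "ruleA p absv n x = (if n = 0 then sbar p absv x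
                       else if padic_val p absv x = 0 then sbar p absv x
                       else if padic_val p absv x < 0 then tbar p absv x
                       else undefined)"

definition ruleB :: "nat \<Rightarrow> ('a::field_char_0 \<Rightarrow> real) \<Rightarrow> nat \<Rightarrow> 'a \<Rightarrow> rat" where
  "ruleB p absv n x = (if even n then sbar p absv x else tbar p absv x)"

end

(* For both algorithms, |alpha_n - b_n| <= 1/p whenever b_n = sbar(alpha_n) and
   |alpha_n - b_n| <= 1 whenever b_n = tbar(alpha_n): the truncated digit expansions s and t
   already have this accuracy, and the rounding terms only add an element of pZ resp. Z.
   As |alpha_(n+1)| = 1/|alpha_n - b_n|, this gives |b_n| = |alpha_n| >= 1 for n >= 1, and of any
   two consecutive partial quotients one has absolute value >= p.  Then every tail
   [b_k; ..., b_n] with k >= 1 has absolute value |b_k|, so consecutive convergents differ by at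
   most p^-floor(n/2), and the convergents converge by completeness. *)

theory Submission
  imports Defs "HOL-Number_Theory.Cong"
begin

lemma power_int_less_iff_exp:
  fixes a :: "'a::linordered_field"
  assumes "1 < a"
  shows "a powi k < a powi j \<longleftrightarrow> k < j"
proof
  assume less: "a powi k < a powi j"
  show "k < j"
  proof (rule ccontr)
    assume "\<not> k < j"
    then have "a powi j \<le> a powi k"
      using assms by (intro power_int_increasing) auto
    with less show False
      by simp
  qed
qed (rule power_int_strict_increasing[OF _ assms])

lemma power_int_le_iff_exp:
  fixes a :: "'a::linordered_field"
  assumes "1 < a"
  shows "a powi k \<le> a powi j \<longleftrightarrow> k \<le> j"
  using power_int_less_iff_exp[OF assms, of j k] by (simp only: not_less[symmetric])

lemma power_int_inject_exp:
  fixes a :: "'a::linordered_field"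
  assumes "1 < a"
  shows "a powi k = a powi j \<longleftrightarrow> k = j"
  using power_int_le_iff_exp[OF assms] by (metis order.antisym order.refl)

lemma of_rat_power_int: "(of_rat (q powi n) :: 'a::field_char_0) = of_rat q powi n"
  by (simp add: power_int_def of_rat_power of_rat_inverse)

section \<open>Ultrametric absolute values and continued fractions\<close>

definition cf_tail :: "(nat \<Rightarrow> rat) \<Rightarrow> nat \<Rightarrow> nat \<Rightarrow> rat" where
  "cf_tail b k n = cf_eval (map b [k..<Suc n])"

lemma cf_tail_same [simp]: "cf_tail b n n = b n"
  by (simp add: cf_tail_def)

lemma cf_tail_less: "k < n \<Longrightarrow> cf_tail b k n = b k + 1 / cf_tail b (Suc k) n"
  by (simp add: cf_tail_def upt_conv_Cons del: upt_Suc)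

lemma cf_convergent_eq_cf_tail: "cf_convergent b n = cf_tail b 0 n"
  by (simp add: cf_tail_def cf_convergent_def)

locale ultrametric_absv =
  fixes absv :: "'a::field_char_0 \<Rightarrow> real"
  assumes absv_nonneg: "0 \<le> absv x"
    and absv_eq_0_iff: "absv x = 0 \<longleftrightarrow> x = 0"
    and absv_mult: "absv (x * y) = absv x * absv y"
    and absv_add_le: "absv (x + y) \<le> max (absv x) (absv y)"
begin

lemma absv_pos: "x \<noteq> 0 \<Longrightarrow> 0 < absv x"
  using absv_nonneg absv_eq_0_iff by (metis less_eq_real_def)

lemma absv_0 [simp]: "absv 0 = 0"
  by (simp add: absv_eq_0_iff)

lemma absv_1 [simp]: "absv 1 = 1"
  using absv_mult[of 1 1] absv_eq_0_iff[of 1] by simp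

lemma absv_minus [simp]: "absv (- x) = absv x"
proof -
  have "absv (-1) ^ 2 = 1"
    using absv_mult[of "-1" "-1"] by (simp add: power2_eq_square)
  then have "absv (-1) = 1"
    using absv_nonneg[of "-1"] by (auto simp: power2_eq_1_iff)
  then show ?thesis
    using absv_mult[of "-1" x] by simp
qed

lemma absv_minus_commute: "absv (x - y) = absv (y - x)"
  by (metis absv_minus minus_diff_eq)

lemma absv_inverse: "absv (inverse x) = inverse (absv x)"
proof (cases "x = 0")
  case False
  then have "absv (inverse x) * absv x = 1"
    using absv_mult[of "inverse x" x] by simp
  then show ?thesis
    by (metis inverse_unique mult.commute)
qed simp

lemma absv_divide: "absv (x / y) = absv x / absv y"
  by (simp add: divide_inverse absv_mult absv_inverse)

lemma absv_power: "absv (x ^ n) = absv x ^ n"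
  by (induction n) (simp_all add: absv_mult)

lemma absv_power_int: "absv (x powi n) = absv x powi n"
  by (simp add: power_int_def absv_power absv_inverse)

lemma absv_diff_le: "absv (x - y) \<le> max (absv x) (absv y)"
  using absv_add_le[of x "- y"] by simp

lemma absv_add_eq: "absv y < absv x \<Longrightarrow> absv (x + y) = absv x"
  using absv_add_le[of x y] absv_diff_le[of "x + y" y] by auto

lemma absv_eq_if_close: "absv (x - y) < absv x \<Longrightarrow> absv y = absv x"
  using absv_add_eq[of "- (x - y)" x] by (simp add: absv_minus_commute)

lemma absv_sum_le:
  assumes "\<And>i. i \<in> A \<Longrightarrow> absv (f i) \<le> c" and "0 \<le> c"
  shows "absv (sum f A) \<le> c"
  using assms
proof (induction A rule: infinite_finite_induct)
  case (insert x F)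
  then have "absv (f x) \<le> c" and "absv (sum f F) \<le> c"
    by simp_all
  then show ?case
    using absv_add_le[of "f x" "sum f F"] insert.hyps by simp
qed simp_all

lemma absv_of_nat_le_1: "absv (of_nat n) \<le> 1"
proof (induction n)
  case (Suc n)
  then show ?case
    using absv_add_le[of 1 "of_nat n"] by simp
qed simp

lemma absv_of_int_le_1: "absv (of_int m) \<le> 1"
  by (metis absv_minus absv_of_nat_le_1 of_int_minus of_int_of_nat_eq int_cases2)

lemma padic_tendsto_iff: "padic_tendsto absv X L \<longleftrightarrow> (\<lambda>n. absv (X n - L)) \<longlonglongrightarrow> 0"
  by (simp add: padic_tendsto_def LIMSEQ_iff absv_nonneg)

lemma padic_tendsto_if_bounded:
  assumes "\<And>n. absv (X n - L) \<le> \<delta> n" and "\<delta> \<longlonglongrightarrow> 0"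
  shows "padic_tendsto absv X L"
  unfolding padic_tendsto_iff
  by (rule real_tendsto_sandwich[of "\<lambda>_. 0" _ _ \<delta>]) (use assms absv_nonneg in auto)

context
  fixes c :: real and b :: "nat \<Rightarrow> rat"
  assumes c_gt_1: "1 < c"
    and b_large: "\<And>n. 1 \<le> n \<Longrightarrow> 1 \<le> absv (of_rat (b n))"
    and b_alternating: "\<And>n. 1 \<le> n \<Longrightarrow> c \<le> absv (of_rat (b n)) \<or> c \<le> absv (of_rat (b (Suc n)))"
begin

lemma absv_cf_tail: "k \<le> n \<Longrightarrow> 1 \<le> k \<Longrightarrow> absv (of_rat (cf_tail b k n)) = absv (of_rat (b k))"
proof (induction k rule: inc_induct)
  case (step k)
  have "absv (of_rat (1 / cf_tail b (Suc k) n)) = 1 / absv (of_rat (b (Suc k)))"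
    using step.IH step.prems by (simp add: of_rat_divide absv_divide)
  also have "\<dots> < absv (of_rat (b k))"
    using b_alternating[OF step.prems]
  proof
    assume "c \<le> absv (of_rat (b k))"
    moreover have "1 / absv (of_rat (b (Suc k))) \<le> 1"
      using b_large[of "Suc k"] by simp
    ultimately show ?thesis
      using c_gt_1 by linarith
  next
    assume "c \<le> absv (of_rat (b (Suc k)))"
    then have "1 / absv (of_rat (b (Suc k))) < 1"
      using c_gt_1 by simp
    then show ?thesis
      using b_large[OF step.prems] by linarith
  qed
  finally show ?case
    using step.hyps absv_add_eq by (simp add: cf_tail_less of_rat_add)
qed simp

lemma cf_tail_gap_Suc:
  assumes "k < n"
  shows "absv (of_rat (cf_tail b k (Suc n) - cf_tail b k n))
    = absv (of_rat (cf_tail b (Suc k) (Suc n) - cf_tail b (Suc k) n)) / absv (of_rat (b (Suc k))) ^ 2"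
proof -
  let ?x = "cf_tail b (Suc k) (Suc n)" and ?y = "cf_tail b (Suc k) n"
  have abs_x: "absv (of_rat ?x) = absv (of_rat (b (Suc k)))"
    and abs_y: "absv (of_rat ?y) = absv (of_rat (b (Suc k)))"
    using assms by (simp_all add: absv_cf_tail)
  then have "?x \<noteq> 0" "?y \<noteq> 0"
    using b_large[of "Suc k"] by auto
  have "cf_tail b k (Suc n) - cf_tail b k n = 1 / ?x - 1 / ?y"
    using assms cf_tail_less[of k "Suc n" b] cf_tail_less[of k n b] by simp
  also have "\<dots> = (?y - ?x) / (?x * ?y)"
    using \<open>?x \<noteq> 0\<close> \<open>?y \<noteq> 0\<close> by (simp add: field_simps)
  finally show ?thesis
    using abs_x abs_y
    by (simp add: of_rat_divide of_rat_mult absv_divide absv_mult power2_eq_square of_rat_diff absv_minus_commute)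
qed

lemma cf_tail_gap_le_1: "k \<le> n \<Longrightarrow> absv (of_rat (cf_tail b k (Suc n) - cf_tail b k n)) \<le> 1"
proof (induction k rule: inc_induct)
  case base
  have "cf_tail b n (Suc n) - cf_tail b n n = 1 / b (Suc n)"
    by (simp add: cf_tail_less)
  then show ?case
    using b_large[of "Suc n"] by (simp add: of_rat_divide absv_divide)
next
  case (step k)
  have "1 \<le> absv (of_rat (b (Suc k))) ^ 2"
    using b_large[of "Suc k"] by (simp add: one_le_power)
  then show ?case
    using step cf_tail_gap_Suc[OF step.hyps(2)] absv_nonneg
    by (simp add: divide_le_eq)
qed

lemma cf_tail_gap_decay:
  "k + 2 * j \<le> n \<Longrightarrow> absv (of_rat (cf_tail b k (Suc n) - cf_tail b k n)) \<le> (1 / c) ^ j"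
proof (induction j arbitrary: k)
  case 0
  then show ?case
    using cf_tail_gap_le_1 by simp
next
  case (Suc j)
  define gap where "gap i = absv (of_rat (cf_tail b i (Suc n) - cf_tail b i n))" for i
  define B where "B i = absv (of_rat (b i))" for i
  have B_ge_1: "1 \<le> B (Suc k)" "1 \<le> B (Suc (Suc k))"
    using b_large by (simp_all add: B_def)
  have "c \<le> B (Suc k) * B (Suc (Suc k))"
    using b_alternating[of "Suc k"] B_ge_1 c_gt_1 unfolding B_def
    by (auto intro: order_trans mult_right_mono mult_left_mono)
  also have "\<dots> \<le> B (Suc k) ^ 2 * B (Suc (Suc k)) ^ 2"
    using B_ge_1 by (intro mult_mono) (auto simp: power2_eq_square)
  finally have c_le: "c \<le> B (Suc k) ^ 2 * B (Suc (Suc k)) ^ 2" .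
  have "gap k = gap (Suc (Suc k)) / (B (Suc k) ^ 2 * B (Suc (Suc k)) ^ 2)"
    using Suc.prems cf_tail_gap_Suc[of k n] cf_tail_gap_Suc[of "Suc k" n]
    unfolding gap_def B_def by simp
  also have "\<dots> \<le> gap (Suc (Suc k)) / c"
    using c_le c_gt_1 absv_nonneg unfolding gap_def by (intro divide_left_mono) auto
  also have "\<dots> \<le> (1 / c) ^ j / c"
    using Suc.IH[of "Suc (Suc k)"] Suc.prems c_gt_1 unfolding gap_def
    by (intro divide_right_mono) auto
  finally show ?case
    unfolding gap_def by (simp add: field_simps)
qed

lemma cf_convergent_step_le:
  "absv (of_rat (cf_convergent b (Suc n) - cf_convergent b n)) \<le> (1 / c) ^ (n div 2)"
  using cf_tail_gap_decay[of 0 "n div 2" n] by (simp add: cf_convergent_eq_cf_tail)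

end

end

locale complete_ultrametric_absv = ultrametric_absv +
  assumes complete:
    "(\<And>e. 0 < e \<Longrightarrow> \<exists>N. \<forall>m\<ge>N. \<forall>n\<ge>N. absv (X m - X n) < e)
      \<Longrightarrow> \<exists>L. padic_tendsto absv X L"
begin

lemma converges_if_steps_tendsto_0:
  assumes steps: "(\<lambda>n. absv (X (Suc n) - X n)) \<longlonglongrightarrow> 0"
  shows "\<exists>L. padic_tendsto absv X L"
proof (rule complete)
  fix e :: real
  assume "0 < e"
  then obtain N where N: "\<And>n. N \<le> n \<Longrightarrow> absv (X (Suc n) - X n) < e"
    using LIMSEQ_D[OF steps] by (auto simp: absv_nonneg)
  have close_to_N: "absv (X m - X N) < e" if "N \<le> m" for m
    using that
  proof (induction m rule: dec_induct)
    case (step m)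
    then show ?case
      using absv_add_le[of "X (Suc m) - X m" "X m - X N"] N[of m] by simp
  qed (simp add: \<open>0 < e\<close>)
  have "absv (X m - X n) < e" if "N \<le> m" "N \<le> n" for m n
    using absv_diff_le[of "X m - X N" "X n - X N"] close_to_N[of m] close_to_N[of n] that by simp
  then show "\<exists>N. \<forall>m\<ge>N. \<forall>n\<ge>N. absv (X m - X n) < e"
    by blast
qed

lemma cf_convergent_converges:
  assumes "1 < c"
    and "\<And>n. 1 \<le> n \<Longrightarrow> 1 \<le> absv (of_rat (b n))"
    and "\<And>n. 1 \<le> n \<Longrightarrow> c \<le> absv (of_rat (b n)) \<or> c \<le> absv (of_rat (b (Suc n)))"
  shows "\<exists>L. padic_tendsto absv (\<lambda>n. of_rat (cf_convergent b n)) L"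
proof (rule converges_if_steps_tendsto_0)
  have "filterlim (\<lambda>n::nat. n div 2) at_top sequentially"
  proof (subst filterlim_at_top, intro allI)
    fix Z :: nat
    show "eventually (\<lambda>n. Z \<le> n div 2) sequentially"
      unfolding eventually_at_top_linorder by (rule exI[of _ "2 * Z"]) auto
  qed
  then have decay: "(\<lambda>n. (1 / c) ^ (n div 2)) \<longlonglongrightarrow> 0"
    using \<open>1 < c\<close> by (intro filterlim_compose[OF LIMSEQ_power_zero]) auto
  let ?step = "\<lambda>n. absv (of_rat (cf_convergent b (Suc n)) - of_rat (cf_convergent b n))"
  have step_le: "?step n \<le> (1 / c) ^ (n div 2)" for n
    using cf_convergent_step_le[of c b n] assms unfolding of_rat_diff by blast
  show "?step \<longlonglongrightarrow> 0"
  proof (rule real_tendsto_sandwich[where f = "\<lambda>_. 0"])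
    show "\<forall>\<^sub>F n in sequentially. 0 \<le> ?step n"
      by (intro always_eventually allI absv_nonneg)
    show "\<forall>\<^sub>F n in sequentially. ?step n \<le> (1 / c) ^ (n div 2)"
      by (intro always_eventually allI step_le)
  qed (use decay in auto)
qed

lemma cf_convergent_converges_if_close:
  assumes "1 < c"
    and close: "\<And>n. 1 \<le> n \<Longrightarrow> absv (\<alpha> n - of_rat (b n)) < absv (\<alpha> n)"
    and "\<And>n. 1 \<le> n \<Longrightarrow> 1 \<le> absv (\<alpha> n)"
    and "\<And>n. 1 \<le> n \<Longrightarrow> c \<le> absv (\<alpha> n) \<or> c \<le> absv (\<alpha> (Suc n))"
  shows "\<exists>L. padic_tendsto absv (\<lambda>n. of_rat (cf_convergent b n)) L"
proof -
  have "absv (of_rat (b n)) = absv (\<alpha> n)" if "1 \<le> n" for n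
    using absv_eq_if_close[OF close[OF that]] .
  then show ?thesis
    using assms by (intro cf_convergent_converges[of c]) auto
qed

end

section \<open>\<open>p\<close>-adic digit expansions\<close>

lemma digit_set_complete:
  assumes "p = 2 \<or> odd p"
  shows "\<exists>c\<in>digit_set p. [c = z] (mod int p)"
proof (cases "p = 2")
  case True
  have "z mod 2 \<in> digit_set p"
    using True pos_mod_bound[of 2 z] pos_mod_sign[of 2 z] by (auto simp: digit_set_def)
  moreover have "[z mod 2 = z] (mod int p)"
    using True by (simp add: cong_def)
  ultimately show ?thesis
    by blast
next
  case False
  define h where "h = (int p - 1) div 2"
  have p_eq: "int p = 2 * h + 1"
    using assms False unfolding h_def by presburger
  define c where "c = (z + h) mod int p - h"
  have "0 < int p"
    using assms False by (auto elim: oddE)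
  then have "0 \<le> (z + h) mod int p" "(z + h) mod int p < int p"
    by simp_all
  then have "c \<in> {-h..h}"
    using p_eq unfolding c_def by simp
  moreover have "[c = z] (mod int p)"
    unfolding c_def cong_def by (simp add: mod_diff_left_eq)
  ultimately show ?thesis
    using False unfolding digit_set_def h_def by auto
qed

lemma digit_set_cong_imp_eq:
  assumes "c \<in> digit_set p" "c' \<in> digit_set p" "[c = c'] (mod int p)"
  shows "c = c'"
proof (rule ccontr)
  assume "c \<noteq> c'"
  moreover have "int p dvd c - c'"
    using assms(3) by (simp add: cong_iff_dvd_diff)
  ultimately have "int p \<le> \<bar>c - c'\<bar>"
    using dvd_imp_le_int[of "c - c'" "int p"] by simp
  moreover have "\<bar>c - c'\<bar> < int p"
  proof (cases "p = 2")
    case True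
    then show ?thesis
      using assms(1,2) by (auto simp: digit_set_def)
  next
    case False
    have "2 * ((int p - 1) div 2) \<le> int p - 1"
      by presburger
    then show ?thesis
      using False assms(1,2) by (auto simp: digit_set_def)
  qed
  ultimately show False
    by simp
qed

definition digit_sum :: "nat \<Rightarrow> (int \<Rightarrow> int) \<Rightarrow> int \<Rightarrow> int \<Rightarrow> rat" where
  "digit_sum p a v u = (\<Sum>n\<in>{v..u}. of_int (a n) * of_nat p powi n)"

lemma digit_sum_reindex:
  "digit_sum p a v (v + int N) = (\<Sum>k\<le>N. of_int (a (v + int k)) * of_nat p powi (v + int k))"
proof -
  have "{v..v + int N} = (\<lambda>k. v + int k) ` {..N}"
  proof (intro equalityI subsetI)
    fix n
    assume "n \<in> {v..v + int N}"
    then show "n \<in> (\<lambda>k. v + int k) ` {..N}"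
      by (intro image_eqI[of _ _ "nat (n - v)"]) auto
  qed auto
  then show ?thesis
    unfolding digit_sum_def by (simp add: sum.reindex inj_on_def)
qed

locale padic_absv = complete_ultrametric_absv absv for absv :: "'a::field_char_0 \<Rightarrow> real" +
  fixes p :: nat
  assumes prime: "prime p"
    and absv_p: "absv (of_nat p) = 1 / real p"
    and absv_coprime: "coprime m (int p) \<Longrightarrow> absv (of_int m) = 1"
    and rat_dense: "0 < e \<Longrightarrow> \<exists>q. absv (x - of_rat q) < e"

lemma padic_absvI:
  assumes "prime p" and "padic_field p absv"
  shows "padic_absv absv p"
  using assms unfolding padic_field_def by unfold_locales (simp_all add: padic_tendsto_def)

context padic_absv
begin

lemma p_gt_1: "1 < real p"
  using prime prime_gt_1_nat by simp

lemma one_over_p_less_1: "1 / real p < 1"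
  using p_gt_1 by simp

lemma absv_power_int_p: "absv (of_nat p powi n) = real p powi (- n)"
  by (simp add: absv_power_int absv_p power_int_minus power_int_one_over inverse_eq_divide)

lemma prime_int_p: "prime (int p)"
  using prime by simp

lemma absv_of_int_not_dvd: "\<not> int p dvd m \<Longrightarrow> absv (of_int m) = 1"
  using prime_imp_coprime[OF prime_int_p] by (simp add: absv_coprime coprime_commute)

lemma absv_of_int_dvd: "int p dvd m \<Longrightarrow> absv (of_int m) \<le> 1 / real p"
  using absv_of_int_le_1 p_gt_1 by (auto simp: absv_mult absv_p divide_right_mono)

lemma absv_of_int: "m \<noteq> 0 \<Longrightarrow> absv (of_int m) = real p powi (- int (multiplicity (int p) m))"
proof -
  assume "m \<noteq> 0"
  define k where "k = multiplicity (int p) m"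
  obtain m' where m: "m = int p ^ k * m'" and "\<not> int p dvd m'"
    using multiplicity_decompose'[OF \<open>m \<noteq> 0\<close>] not_prime_unit prime_int_p unfolding k_def by blast
  then have "absv (of_int m) = absv (of_nat p) ^ k"
    by (simp add: absv_mult absv_power absv_of_int_not_dvd)
  then show ?thesis
    by (simp add: k_def absv_p power_int_minus power_one_over inverse_eq_divide)
qed

lemma absv_of_rat_eq_power_int: "q \<noteq> 0 \<Longrightarrow> \<exists>k. absv (of_rat q) = real p powi k"
proof -
  assume "q \<noteq> 0"
  obtain a b where "quotient_of q = (a, b)"
    by (cases "quotient_of q")
  then have q: "q = of_int a / of_int b" and "0 < b"
    by (simp_all add: quotient_of_div quotient_of_denom_pos)
  then have "a \<noteq> 0"
    using \<open>q \<noteq> 0\<close> by auto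
  have "absv (of_rat q) = absv (of_int a) / absv (of_int b)"
    by (simp add: q of_rat_divide absv_divide)
  also have "\<dots> = real p powi (int (multiplicity (int p) b) - int (multiplicity (int p) a))"
    using \<open>a \<noteq> 0\<close> \<open>0 < b\<close> p_gt_1
    by (simp add: absv_of_int power_int_diff power_int_minus divide_inverse)
  finally show ?thesis ..
qed

lemma absv_eq_power_int: "x \<noteq> 0 \<Longrightarrow> \<exists>k. absv x = real p powi k"
proof -
  assume "x \<noteq> 0"
  then obtain q where "absv (x - of_rat q) < absv x"
    using rat_dense absv_pos by blast
  then have "absv (of_rat q) = absv x"
    by (rule absv_eq_if_close)
  moreover from this have "q \<noteq> 0"
    using \<open>x \<noteq> 0\<close> absv_pos by fastforce
  ultimately show ?thesis
    using absv_of_rat_eq_power_int by metis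
qed

lemma absv_eq_power_int_padic_val: "x \<noteq> 0 \<Longrightarrow> absv x = real p powi (- padic_val p absv x)"
proof -
  assume "x \<noteq> 0"
  then obtain k where k: "absv x = real p powi k"
    using absv_eq_power_int by blast
  have powr: "real p powr (- of_int r) = real p powi (- r)" for r :: int
    using p_gt_1 powr_real_of_int'[of "real p" "- r"] by simp
  have "\<exists>!r::int. absv x = real p powr (- of_int r)"
    using k p_gt_1 by (auto simp: powr power_int_inject_exp intro!: exI[of _ "- k"])
  then have "absv x = real p powr (- of_int (padic_val p absv x))"
    unfolding padic_val_def by (rule theI')
  then show ?thesis
    by (simp add: powr)
qed

lemma padic_val_eq_0_iff: "x \<noteq> 0 \<Longrightarrow> padic_val p absv x = 0 \<longleftrightarrow> absv x = 1"
  using power_int_inject_exp[OF p_gt_1, of _ 0] by (simp add: absv_eq_power_int_padic_val)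

lemma padic_val_neg_iff: "x \<noteq> 0 \<Longrightarrow> padic_val p absv x < 0 \<longleftrightarrow> 1 < absv x"
  using power_int_less_iff_exp[OF p_gt_1, of 0] by (simp add: absv_eq_power_int_padic_val)

lemma absv_gt_1_imp_ge_p: "1 < absv x \<Longrightarrow> real p \<le> absv x"
proof -
  assume "1 < absv x"
  then have "x \<noteq> 0"
    by auto
  then have "padic_val p absv x < 0"
    using padic_val_neg_iff \<open>1 < absv x\<close> by blast
  then have "1 \<le> - padic_val p absv x"
    by simp
  with \<open>x \<noteq> 0\<close> show ?thesis
    using power_int_le_iff_exp[OF p_gt_1, of 1] by (simp add: absv_eq_power_int_padic_val)
qed

lemma not_dvd_denominator:
  assumes "coprime a b" and "b \<noteq> 0" and "absv (of_rat (of_int a / of_int b)) \<le> 1"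
  shows "\<not> int p dvd b"
proof
  assume "int p dvd b"
  then have "\<not> int p dvd a"
    using assms(1) coprime_common_divisor not_prime_unit prime_int_p by blast
  then have "absv (of_rat (of_int a / of_int b)) = 1 / absv (of_int b)"
    by (simp add: of_rat_divide absv_divide absv_of_int_not_dvd)
  also have "\<dots> \<ge> real p"
  proof -
    have "absv (of_int b) * real p \<le> 1"
      using absv_of_int_dvd[OF \<open>int p dvd b\<close>] p_gt_1 by (simp add: le_divide_eq)
    then show ?thesis
      using absv_pos[of "of_int b"] \<open>b \<noteq> 0\<close> by (simp add: le_divide_eq mult.commute)
  qed
  finally show False
    using assms(3) p_gt_1 by simp
qed

lemma p_2_or_odd: "p = 2 \<or> odd p"
proof (cases "p = 2")
  case False
  then have "2 < p"
    using prime_ge_2_nat[OF prime] by simp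
  then show ?thesis
    using prime_odd_nat[OF prime] by simp
qed simp

lemma exists_digit_close_rat:
  assumes "absv (of_rat q) \<le> 1"
  shows "\<exists>c\<in>digit_set p. absv (of_rat q - of_int c) \<le> 1 / real p"
proof -
  obtain a b where "quotient_of q = (a, b)"
    by (cases "quotient_of q")
  then have q: "q = of_int a / of_int b" and "0 < b" and "coprime a b"
    by (simp_all add: quotient_of_div quotient_of_denom_pos quotient_of_coprime)
  then have "\<not> int p dvd b"
    using assms by (intro not_dvd_denominator) auto
  then have "coprime b (int p)"
    using prime_imp_coprime[OF prime_int_p] by (simp add: coprime_commute)
  then obtain u where u: "[b * u = 1] (mod int p)"
    using cong_solve_coprime_int by blast
  obtain c where c: "c \<in> digit_set p" and "[c = a * u] (mod int p)"
    using digit_set_complete[OF p_2_or_odd] by blast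
  then have "[c * b = a * (b * u)] (mod int p)"
    using cong_scalar_right[of c "a * u" "int p" b] by (simp add: mult_ac)
  also have "[a * (b * u) = a] (mod int p)"
    using cong_scalar_left[OF u, of a] by simp
  finally have "int p dvd a - c * b"
    by (simp add: cong_iff_dvd_diff dvd_diff_commute)
  then have "absv (of_int (a - c * b) :: 'a) \<le> 1 / real p"
    by (rule absv_of_int_dvd)
  moreover have "of_rat q - of_int c = (of_int (a - c * b) :: 'a) / of_int b"
    using \<open>0 < b\<close> by (simp add: q of_rat_divide field_simps)
  ultimately have "absv (of_rat q - of_int c) \<le> 1 / real p"
    using absv_of_int_not_dvd[OF \<open>\<not> int p dvd b\<close>] by (simp add: absv_divide)
  with c show ?thesis
    by blast
qed

lemma exists_digit_close:
  assumes "absv y \<le> 1"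
  shows "\<exists>c\<in>digit_set p. absv (y - of_int c) \<le> 1 / real p"
proof -
  obtain q where q: "absv (y - of_rat q) < 1 / real p"
    using rat_dense p_gt_1 by force
  have "absv (of_rat q) \<le> 1"
    using absv_diff_le[of y "y - of_rat q"] assms q one_over_p_less_1 by simp
  then obtain c where "c \<in> digit_set p" and c: "absv (of_rat q - of_int c) \<le> 1 / real p"
    using exists_digit_close_rat by blast
  moreover have "absv (y - of_int c) \<le> 1 / real p"
    using absv_add_le[of "y - of_rat q" "of_rat q - of_int c"] q c by simp
  ultimately show ?thesis
    by blast
qed

lemma unit_ball_expansion:
  assumes "absv y \<le> 1"
  obtains d :: "nat \<Rightarrow> int"
  where "\<And>k. d k \<in> digit_set p"
    and "\<And>N. absv (y - (\<Sum>k<N. of_int (d k) * of_nat p ^ k)) \<le> (1 / real p) ^ N"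
proof -
  obtain digit where digit: "\<And>z. absv z \<le> 1 \<Longrightarrow>
      digit z \<in> digit_set p \<and> absv (z - of_int (digit z)) \<le> 1 / real p"
    using exists_digit_close by metis
  define r where "r = rec_nat y (\<lambda>_ z. (z - of_int (digit z)) / of_nat p)"
  have r_0: "r 0 = y" and r_Suc: "r (Suc k) = (r k - of_int (digit (r k))) / of_nat p" for k
    by (simp_all add: r_def)
  have r_le_1: "absv (r k) \<le> 1" for k
  proof (induction k)
    case (Suc k)
    have "absv (r (Suc k)) = absv (r k - of_int (digit (r k))) * real p"
      by (simp add: r_Suc absv_divide absv_p)
    also have "\<dots> \<le> 1 / real p * real p"
      using digit[OF Suc] by (intro mult_right_mono) auto
    finally show ?case
      using p_gt_1 by simp
  qed (simp add: r_0 assms)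
  have p_nz: "(of_nat p :: 'a) \<noteq> 0"
    using p_gt_1 by simp
  have remainder: "y = (\<Sum>k<N. of_int (digit (r k)) * of_nat p ^ k) + of_nat p ^ N * r N" for N
  proof (induction N)
    case (Suc N)
    have "r N = of_int (digit (r N)) + of_nat p * r (Suc N)"
      using p_nz by (simp add: r_Suc)
    then have "of_nat p ^ N * r N = of_nat p ^ N * (of_int (digit (r N)) + of_nat p * r (Suc N))"
      by (rule arg_cong)
    also have "\<dots> = of_int (digit (r N)) * of_nat p ^ N + of_nat p ^ Suc N * r (Suc N)"
      by (simp add: algebra_simps)
    finally show ?case
      using Suc by simp
  qed (simp add: r_0)
  show ?thesis
  proof
    show "digit (r k) \<in> digit_set p" for k
      using digit[OF r_le_1] by blast
    show "absv (y - (\<Sum>k<N. of_int (digit (r k)) * of_nat p ^ k)) \<le> (1 / real p) ^ N" for N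
      using remainder[of N] r_le_1[of N] p_gt_1
      by (auto simp: absv_mult absv_power absv_p power_one_over intro!: divide_right_mono)
  qed
qed

definition digit_expansion :: "int \<Rightarrow> 'a \<Rightarrow> (int \<Rightarrow> int) \<Rightarrow> bool" where
  "digit_expansion v x a \<longleftrightarrow>
     (\<forall>n. a n \<in> digit_set p) \<and> (\<forall>n<v. a n = 0) \<and> a v \<noteq> 0 \<and>
     padic_tendsto absv (\<lambda>N. of_rat (digit_sum p a v (v + int N))) x"

lemma padic_digits_eq_The: "padic_digits p absv x = (THE a. digit_expansion (padic_val p absv x) x a)"
  by (simp add: padic_digits_def digit_expansion_def digit_sum_def)

lemma zero_in_digit_set: "0 \<in> digit_set p"
  using p_gt_1 by (simp add: digit_set_def)

lemma absv_digit_term_le: "absv (of_rat (of_int c * of_nat p powi n) :: 'a) \<le> real p powi (- n)"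
  using absv_of_int_le_1[of c] p_gt_1
  by (simp add: of_rat_mult of_rat_power_int absv_mult absv_power_int_p mult_left_le_one_le)

lemma digit_expansion_partial_bound:
  assumes "digit_expansion v x a"
  shows "absv (x - of_rat (digit_sum p a v u)) \<le> real p powi (- (u + 1))"
proof -
  let ?\<epsilon> = "real p powi (- (u + 1))"
  obtain N0 where N0: "\<And>N. N0 \<le> N \<Longrightarrow> absv (of_rat (digit_sum p a v (v + int N)) - x) < ?\<epsilon>"
    using assms p_gt_1 unfolding digit_expansion_def padic_tendsto_def by fastforce
  define N where "N = max N0 (nat (u - v))"
  have "absv (x - of_rat (digit_sum p a v (v + int N))) \<le> ?\<epsilon>"
    using N0[of N] by (simp add: N_def absv_minus_commute)
  moreover have "absv (of_rat (digit_sum p a v (v + int N)) - of_rat (digit_sum p a v u) :: 'a) \<le> ?\<epsilon>"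
  proof -
    have "{v..u} \<subseteq> {v..v + int N}"
      by (auto simp: N_def)
    then have "of_rat (digit_sum p a v (v + int N)) - of_rat (digit_sum p a v u)
        = (\<Sum>n\<in>{v..v + int N} - {v..u}. of_rat (of_int (a n) * of_nat p powi n) :: 'a)"
      unfolding digit_sum_def by (simp add: sum_diff of_rat_sum flip: of_rat_diff)
    moreover have "absv (of_rat (of_int (a n) * of_nat p powi n) :: 'a) \<le> ?\<epsilon>"
      if "n \<in> {v..v + int N} - {v..u}" for n
      using that absv_digit_term_le[of "a n" n] power_int_le_iff_exp[OF p_gt_1, of "- n" "- (u + 1)"]
      by auto
    ultimately show ?thesis
      using p_gt_1 by (auto intro!: absv_sum_le)
  qed
  ultimately show ?thesis
    using absv_add_le[of "x - of_rat (digit_sum p a v (v + int N))"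
        "of_rat (digit_sum p a v (v + int N)) - of_rat (digit_sum p a v u)"]
    by simp
qed

lemma digit_expansion_agree_at:
  assumes a: "digit_expansion v x a" and a': "digit_expansion v x a'"
    and "v \<le> u" and below: "\<And>n. n < u \<Longrightarrow> a n = a' n"
  shows "a u = a' u"
proof -
  have "(\<Sum>n\<in>{v..u}. of_int (a n - a' n) * of_nat p powi n)
      = (\<Sum>n\<in>{v..u}. if n = u then of_int (a u - a' u) * of_nat p powi u else (0 :: rat))"
    using below by (intro sum.cong) auto
  then have "digit_sum p a v u - digit_sum p a' v u = of_int (a u - a' u) * of_nat p powi u"
    using \<open>v \<le> u\<close> unfolding digit_sum_def by (simp add: algebra_simps flip: sum_subtractf)
  then have "of_rat (digit_sum p a v u) - of_rat (digit_sum p a' v u)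
      = (of_rat (of_int (a u - a' u) * of_nat p powi u) :: 'a)"
    by (simp flip: of_rat_diff)
  also have "\<dots> = of_int (a u - a' u) * of_nat p powi u"
    by (simp only: of_rat_mult of_rat_of_int_eq of_rat_power_int of_rat_of_nat_eq)
  finally have diff_eq: "of_rat (digit_sum p a v u) - of_rat (digit_sum p a' v u)
      = (of_int (a u - a' u) * of_nat p powi u :: 'a)" .
  moreover have "absv (of_rat (digit_sum p a v u) - of_rat (digit_sum p a' v u) :: 'a)
      \<le> real p powi (- (u + 1))"
    using absv_diff_le[of "x - of_rat (digit_sum p a' v u)" "x - of_rat (digit_sum p a v u)"]
      digit_expansion_partial_bound[OF a, of u] digit_expansion_partial_bound[OF a', of u]
    by simp
  ultimately have "absv (of_int (a u - a' u) :: 'a) * real p powi (- u) \<le> real p powi (- (u + 1))"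
    by (simp only: diff_eq absv_mult absv_power_int_p)
  moreover have "real p powi (- (u + 1)) < real p powi (- u)"
    using power_int_less_iff_exp[OF p_gt_1] by simp
  ultimately have "int p dvd a u - a' u"
    using absv_of_int_not_dvd by force
  moreover have "a u \<in> digit_set p" "a' u \<in> digit_set p"
    using a a' by (simp_all add: digit_expansion_def)
  ultimately show ?thesis
    using digit_set_cong_imp_eq by (simp add: cong_iff_dvd_diff)
qed

lemma digit_expansion_unique:
  assumes a: "digit_expansion v x a" and a': "digit_expansion v x a'"
  shows "a = a'"
proof -
  have "\<forall>n < v + int k. a n = a' n" for k
  proof (induction k)
    case 0
    then show ?case
      using a a' by (simp add: digit_expansion_def)
  next
    case (Suc k)
    then have "a (v + int k) = a' (v + int k)"
      using digit_expansion_agree_at[OF a a'] by simp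
    moreover have "n < v + int k \<or> n = v + int k" if "n < v + int (Suc k)" for n
      using that by auto
    ultimately show ?case
      using Suc by blast
  qed
  moreover have "n < v + int (nat (n - v) + 1)" for n
    by (cases "v \<le> n") auto
  ultimately show ?thesis
    by blast
qed

lemma of_rat_digit_sum_shift:
  "(of_rat (digit_sum p (\<lambda>n. if v \<le> n then d (nat (n - v)) else 0) v (v + int N)) :: 'a)
    = of_nat p powi v * (\<Sum>k<Suc N. of_int (d k) * of_nat p ^ k)"
  using p_gt_1
  by (simp add: digit_sum_reindex of_rat_sum of_rat_mult of_rat_power_int of_rat_power power_int_add
      sum_distrib_left lessThan_Suc_atMost mult_ac)

lemma digit_expansion_exists:
  assumes "x \<noteq> 0"
  shows "\<exists>a. digit_expansion (padic_val p absv x) x a"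
proof -
  define v where "v = padic_val p absv x"
  define y where "y = x / of_nat p powi v"
  have x_eq: "x = of_nat p powi v * y"
    using p_gt_1 by (simp add: y_def)
  have "absv y = 1"
    using absv_eq_power_int_padic_val[OF assms] p_gt_1
    by (simp add: y_def v_def absv_divide absv_power_int_p)
  then obtain d where d_digit: "\<And>k. d k \<in> digit_set p"
    and d_close: "\<And>N. absv (y - (\<Sum>k<N. of_int (d k) * of_nat p ^ k)) \<le> (1 / real p) ^ N"
    using unit_ball_expansion[of y] by (metis order.refl)
  define a where "a = (\<lambda>n. if v \<le> n then d (nat (n - v)) else 0)"
  have "absv (of_rat (digit_sum p a v (v + int N)) - x) \<le> real p powi (- v) * (1 / real p) ^ Suc N"
    for N
  proof -
    have "of_rat (digit_sum p a v (v + int N)) - x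
        = of_nat p powi v * ((\<Sum>k<Suc N. of_int (d k) * of_nat p ^ k) - y)"
      by (simp only: a_def of_rat_digit_sum_shift x_eq right_diff_distrib)
    then have "absv (of_rat (digit_sum p a v (v + int N)) - x)
        = real p powi (- v) * absv (y - (\<Sum>k<Suc N. of_int (d k) * of_nat p ^ k))"
      by (simp only: absv_mult absv_power_int_p absv_minus_commute)
    then show ?thesis
      using d_close[of "Suc N"] by (simp add: mult_left_mono del: sum.lessThan_Suc power_Suc)
  qed
  moreover have "(\<lambda>N. real p powi (- v) * (1 / real p) ^ Suc N) \<longlonglongrightarrow> 0"
    using p_gt_1 by (intro tendsto_mult_right_zero LIMSEQ_power_zero[THEN LIMSEQ_Suc]) simp
  ultimately have "padic_tendsto absv (\<lambda>N. of_rat (digit_sum p a v (v + int N))) x"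
    by (rule padic_tendsto_if_bounded)
  moreover have "a v \<noteq> 0"
  proof
    assume "a v = 0"
    then have "absv y \<le> 1 / real p"
      using d_close[of 1] by (simp add: a_def)
    with \<open>absv y = 1\<close> show False
      using one_over_p_less_1 by simp
  qed
  ultimately have "digit_expansion v x a"
    using d_digit zero_in_digit_set by (simp add: digit_expansion_def a_def)
  then show ?thesis
    unfolding v_def by blast
qed

lemma digit_expansion_padic_digits:
  "x \<noteq> 0 \<Longrightarrow> digit_expansion (padic_val p absv x) x (padic_digits p absv x)"
  unfolding padic_digits_eq_The
  using digit_expansion_exists digit_expansion_unique by (metis theI)

lemma padic_s_close: "absv (x - of_rat (padic_s p absv x)) \<le> 1 / real p"
proof (cases "x = 0")
  case False
  then show ?thesis
    using digit_expansion_partial_bound[OF digit_expansion_padic_digits[OF False], of 0]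
    by (simp add: padic_s_def digit_sum_def power_int_minus_divide)
qed (simp add: padic_s_def)

lemma padic_t_close: "absv (x - of_rat (padic_t p absv x)) \<le> 1"
proof (cases "x = 0")
  case False
  then show ?thesis
    using digit_expansion_partial_bound[OF digit_expansion_padic_digits[OF False], of "-1"]
    by (simp add: padic_t_def digit_sum_def)
qed (simp add: padic_t_def)

lemma sbar_close: "absv (x - of_rat (sbar p absv x)) \<le> 1 / real p"
proof -
  define k where "k = round ((trace_Q x / of_nat (deg_Q x) - padic_s p absv x) / of_nat p)"
  have eq: "x - of_rat (sbar p absv x) = (x - of_rat (padic_s p absv x)) + of_int (- k * int p)"
    by (simp add: sbar_def k_def of_rat_add of_rat_mult)
  have "absv (of_int (- k * int p) :: 'a) \<le> 1 / real p"
    by (intro absv_of_int_dvd) simp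
  then show ?thesis
    unfolding eq using padic_s_close[of x] by (intro order_trans[OF absv_add_le]) simp
qed

lemma tbar_close: "absv (x - of_rat (tbar p absv x)) \<le> 1"
proof -
  define k where "k = round (trace_Q x / of_nat (deg_Q x) - padic_t p absv x)"
  have eq: "x - of_rat (tbar p absv x) = (x - of_rat (padic_t p absv x)) + of_int (- k)"
    by (simp add: tbar_def k_def of_rat_add)
  show ?thesis
    unfolding eq using padic_t_close[of x] absv_of_int_le_1[of "- k"]
    by (intro order_trans[OF absv_add_le]) simp
qed

end

section \<open>The expansion algorithms\<close>

context padic_absv
begin

lemma absv_cf_alpha_Suc_ge:
  assumes "\<not> cf_stops rule a"
    and "absv (cf_alpha rule a n - of_rat (cf_b rule a n)) \<le> r"
  shows "1 / r \<le> absv (cf_alpha rule a (Suc n))"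
proof -
  let ?e = "cf_alpha rule a n - of_rat (cf_b rule a n)"
  have "0 < absv ?e"
    using assms(1) absv_pos by (auto simp: cf_stops_def)
  moreover have "absv (cf_alpha rule a (Suc n)) = 1 / absv ?e"
    by (simp add: cf_b_def inverse_eq_divide absv_divide)
  ultimately show ?thesis
    using assms(2) by (simp add: frac_le)
qed

lemma cf_sbar_step:
  assumes "\<not> cf_stops rule a" and "cf_b rule a n = sbar p absv (cf_alpha rule a n)"
  shows "absv (cf_alpha rule a n - of_rat (cf_b rule a n)) \<le> 1 / real p"
    and "real p \<le> absv (cf_alpha rule a (Suc n))"
proof -
  show err: "absv (cf_alpha rule a n - of_rat (cf_b rule a n)) \<le> 1 / real p"
    unfolding assms(2) by (rule sbar_close)
  show "real p \<le> absv (cf_alpha rule a (Suc n))"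
    using absv_cf_alpha_Suc_ge[OF assms(1) err] by simp
qed

lemma cf_tbar_step:
  assumes "\<not> cf_stops rule a" and "cf_b rule a n = tbar p absv (cf_alpha rule a n)"
  shows "absv (cf_alpha rule a n - of_rat (cf_b rule a n)) \<le> 1"
    and "1 \<le> absv (cf_alpha rule a (Suc n))"
proof -
  show err: "absv (cf_alpha rule a n - of_rat (cf_b rule a n)) \<le> 1"
    unfolding assms(2) by (rule tbar_close)
  show "1 \<le> absv (cf_alpha rule a (Suc n))"
    using absv_cf_alpha_Suc_ge[OF assms(1) err] by simp
qed

lemma ruleB_converges:
  assumes stops: "\<not> cf_stops (ruleB p absv) a"
  shows "\<exists>L. padic_tendsto absv (\<lambda>n. of_rat (cf_convergent (cf_b (ruleB p absv) a) n)) L"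
proof -
  let ?\<alpha> = "cf_alpha (ruleB p absv) a" and ?b = "cf_b (ruleB p absv) a"
  have b_even: "?b n = sbar p absv (?\<alpha> n)" if "even n" for n
    using that by (simp add: cf_b_def ruleB_def)
  have b_odd: "?b n = tbar p absv (?\<alpha> n)" if "odd n" for n
    using that by (simp add: cf_b_def ruleB_def)
  have odd_large: "real p \<le> absv (?\<alpha> n)" if "odd n" for n
    using that cf_sbar_step(2)[OF stops b_even, of "n - 1"] by (simp add: odd_pos)
  have even_large: "1 \<le> absv (?\<alpha> n)" if "even n" "1 \<le> n" for n
    using that cf_tbar_step(2)[OF stops b_odd, of "n - 1"] by simp
  show ?thesis
  proof (rule cf_convergent_converges_if_close[OF p_gt_1])
    fix n :: nat
    assume "1 \<le> n"
    show "1 \<le> absv (?\<alpha> n)"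
      using odd_large[of n] even_large[of n] \<open>1 \<le> n\<close> p_gt_1 by fastforce
    show "absv (?\<alpha> n - of_rat (?b n)) < absv (?\<alpha> n)"
    proof (cases "even n")
      case True
      then show ?thesis
        using cf_sbar_step(1)[OF stops b_even] even_large[of n] \<open>1 \<le> n\<close> one_over_p_less_1
        by fastforce
    next
      case False
      then show ?thesis
        using cf_tbar_step(1)[OF stops b_odd] odd_large[of n] p_gt_1 by fastforce
    qed
    show "real p \<le> absv (?\<alpha> n) \<or> real p \<le> absv (?\<alpha> (Suc n))"
      using odd_large[of n] odd_large[of "Suc n"] by auto
  qed
qed

lemma ruleA_cf_b_unit:
  assumes "n = 0 \<or> absv (cf_alpha (ruleA p absv) a n) = 1"
  shows "cf_b (ruleA p absv) a n = sbar p absv (cf_alpha (ruleA p absv) a n)"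
  using assms padic_val_eq_0_iff[of "cf_alpha (ruleA p absv) a n"]
  by (cases "cf_alpha (ruleA p absv) a n = 0") (auto simp: cf_b_def ruleA_def)

lemma ruleA_cf_b_large:
  assumes "1 \<le> n" and "1 < absv (cf_alpha (ruleA p absv) a n)"
  shows "cf_b (ruleA p absv) a n = tbar p absv (cf_alpha (ruleA p absv) a n)"
  using assms padic_val_neg_iff[of "cf_alpha (ruleA p absv) a n"]
    padic_val_eq_0_iff[of "cf_alpha (ruleA p absv) a n"]
  by (cases "cf_alpha (ruleA p absv) a n = 0") (auto simp: cf_b_def ruleA_def)

(* In particular the undefined branch of ruleA (positive valuation at a step n >= 1) is never taken. *)
lemma ruleA_absv_cf_alpha_ge_1:
  assumes stops: "\<not> cf_stops (ruleA p absv) a" and "1 \<le> n"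
  shows "1 \<le> absv (cf_alpha (ruleA p absv) a n)"
  using \<open>1 \<le> n\<close>
proof (induction n rule: dec_induct)
  case base
  then show ?case
    using cf_sbar_step(2)[OF stops ruleA_cf_b_unit, of 0] p_gt_1 by simp
next
  case (step n)
  then consider "absv (cf_alpha (ruleA p absv) a n) = 1" | "1 < absv (cf_alpha (ruleA p absv) a n)"
    by fastforce
  then show ?case
    using cf_sbar_step(2)[OF stops ruleA_cf_b_unit, of n] cf_tbar_step(2)[OF stops ruleA_cf_b_large, of n]
      step.hyps p_gt_1
    by cases auto
qed

lemma ruleA_converges:
  assumes stops: "\<not> cf_stops (ruleA p absv) a"
  shows "\<exists>L. padic_tendsto absv (\<lambda>n. of_rat (cf_convergent (cf_b (ruleA p absv) a) n)) L"
proof -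
  let ?\<alpha> = "cf_alpha (ruleA p absv) a" and ?b = "cf_b (ruleA p absv) a"
  have close_and_alternating: "absv (?\<alpha> n - of_rat (?b n)) < absv (?\<alpha> n)
      \<and> (real p \<le> absv (?\<alpha> n) \<or> real p \<le> absv (?\<alpha> (Suc n)))" if n_pos: "1 \<le> n" for n
  proof -
    consider (unit) "absv (?\<alpha> n) = 1" | (large) "1 < absv (?\<alpha> n)"
      using ruleA_absv_cf_alpha_ge_1[OF stops n_pos] by fastforce
    then show ?thesis
    proof cases
      case unit
      then have "?b n = sbar p absv (?\<alpha> n)"
        by (intro ruleA_cf_b_unit) simp
      note step = cf_sbar_step[OF stops this]
      have "absv (?\<alpha> n - of_rat (?b n)) < absv (?\<alpha> n)"
        using step(1) unit one_over_p_less_1 by linarith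
      with step(2) show ?thesis
        by blast
    next
      case large
      note step = cf_tbar_step[OF stops ruleA_cf_b_large[OF n_pos large]]
      have "absv (?\<alpha> n - of_rat (?b n)) < absv (?\<alpha> n)"
        using step(1) large by linarith
      with absv_gt_1_imp_ge_p[OF large] show ?thesis
        by blast
    qed
  qed
  show ?thesis
    by (rule cf_convergent_converges_if_close[OF p_gt_1])
      (use close_and_alternating ruleA_absv_cf_alpha_ge_1[OF stops] in blast)+
qed

end

theorem proposition3:
  fixes p :: nat and absv :: "'a::field_char_0 \<Rightarrow> real" and \<alpha> :: 'a
  assumes "prime p" and "padic_field p absv" and "algebraic_over_Q \<alpha>"
  shows "(\<not> cf_stops (ruleA p absv) \<alpha> \<longrightarrow>
            (\<exists>L. padic_tendsto absv (\<lambda>n. of_rat (cf_convergent (cf_b (ruleA p absv) \<alpha>) n)) L))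
       \<and> (\<not> cf_stops (ruleB p absv) \<alpha> \<longrightarrow>
            (\<exists>L. padic_tendsto absv (\<lambda>n. of_rat (cf_convergent (cf_b (ruleB p absv) \<alpha>) n)) L))"
proof -
  interpret padic_absv absv p
    using assms(1,2) by (rule padic_absvI)
  show ?thesis
    using ruleA_converges ruleB_converges by blast
qed

end
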